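(* Define $\mathrm{Mex}(F)=\min(\mathbb{N}_0\setminus F)$ for $F\subseteq\mathbb{N}_0$, and $a+D=\{a+d:d\in D\}$. Define triples $v(n)=(v_1(n),v_2(n),v_3(n))$, $n\ge 0$, recursively by $v(0)=(0,0,0)$ and, for $n\ge 0$, with $F_n=\{v_i(k): 0\le k\le n,\ i\in\{1,2,3\}\}$ and $D_n=\bigcup_{k=0}^{n}\{v_2(k)-v_1(k),\,v_3(k)-v_2(k),\,v_3(k)-v_1(k)\}$, \[ v_1(n+1)=\mathrm{Mex}(F_n),\quad v_2(n+1)=\mathrm{Mex}\big((v_1(n+1)+D_n)\cup\{1,\dots,v_1(n+1)\}\cup F_n\big), \] \[ v_3(n+1)=\mathrm{Mex}\big((v_2(n+1)+D_n)\cup\{1,\dots,v_2(n+1)\}\cup F_n\big). \] Then the three sets $\{v_1(n): n\in\mathbb{N}\}$, $\{v_2(n): n\in\mathbb{N}\}$, $\{v_3(n): n\in\mathbb{N}\}$ are pairwise disjoint and their union is $\mathbb{N}=\{1,2,3,\dots\}$ (i.e., they form a partition of $\mathbb{N}$).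
   Context: $\mathbb{N}_0$ denotes the nonnegative integers and $\mathbb{N}=\mathbb{N}_0\setminus\{0\}$. These triples are the P-positions (sorted) of the 3D Wythoff $L^1$-Nim game. *)

theory Defs
  imports Main
begin

definition Mex :: "nat set \<Rightarrow> nat" where
  "Mex F = (LEAST m. m \<notin> F)"

(* a + D, intersected with N_0 (differences are taken in the integers) *)
definition shift :: "nat \<Rightarrow> int set \<Rightarrow> nat set" where
  "shift a D = {m. \<exists>d\<in>D. int m = int a + d}"

definition Fset :: "(nat \<times> nat \<times> nat) set \<Rightarrow> nat set" where
  "Fset T = (\<Union>(x,y,z)\<in>T. {x, y, z})"

definition Dset :: "(nat \<times> nat \<times> nat) set \<Rightarrow> int set" where
  "Dset T = (\<Union>(x,y,z)\<in>T. {int y - int x, int z - int y, int z - int x})"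

definition next_triple :: "(nat \<times> nat \<times> nat) set \<Rightarrow> nat \<times> nat \<times> nat" where
  "next_triple T =
    (let F = Fset T; D = Dset T;
         a = Mex F;
         b = Mex (shift a D \<union> {1..a} \<union> F);
         c = Mex (shift b D \<union> {1..b} \<union> F)
     in (a, b, c))"

fun vs :: "nat \<Rightarrow> (nat \<times> nat \<times> nat) list" where
  "vs 0 = [(0,0,0)]"
| "vs (Suc n) = vs n @ [next_triple (set (vs n))]"

definition v :: "nat \<Rightarrow> nat \<times> nat \<times> nat" where
  "v n = last (vs n)"

definition v1 :: "nat \<Rightarrow> nat" where "v1 n = fst (v n)"
definition v2 :: "nat \<Rightarrow> nat" where "v2 n = fst (snd (v n))"
definition v3 :: "nat \<Rightarrow> nat" where "v3 n = snd (snd (v n))"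

end

theory Submission
  imports Defs
begin

text \<open>Each new triple consists of three numbers that have not been used before, and its first
  entry is the least unused number. Hence the triples are pairwise disjoint, and by induction
  every n already occurs among v(0), ..., v(n), since the least unused number grows strictly at
  each step.\<close>

lemma Mex_notin: "finite F \<Longrightarrow> Mex F \<notin> F"
  unfolding Mex_def by (metis LeastI_ex ex_new_if_finite infinite_UNIV_nat)

lemma less_Mex_imp_mem: "x < Mex F \<Longrightarrow> x \<in> F"
  unfolding Mex_def using not_less_Least by blast

lemma Mex_mono: "F \<subseteq> G \<Longrightarrow> finite G \<Longrightarrow> Mex F \<le> Mex G"
  unfolding Mex_def by (metis Least_le Mex_def Mex_notin subsetD)

lemma Mex_greater: "finite F \<Longrightarrow> {..a} \<subseteq> F \<Longrightarrow> a < Mex F"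
  using Mex_notin by (metis atMost_iff not_less subsetD)

lemma finite_Fset: "finite T \<Longrightarrow> finite (Fset T)"
  unfolding Fset_def by auto

lemma finite_Dset: "finite T \<Longrightarrow> finite (Dset T)"
  unfolding Dset_def by auto

lemma finite_shift: "finite D \<Longrightarrow> finite (shift a D)"
proof -
  assume "finite D"
  have "shift a D \<subseteq> (\<lambda>d. nat (int a + d)) ` D"
    unfolding shift_def by force
  then show ?thesis using \<open>finite D\<close> finite_subset by blast
qed

lemma next_triple_spec:
  assumes "finite T" and "0 \<in> Fset T" and "next_triple T = (a, b, c)"
  shows "a = Mex (Fset T)" and "a \<notin> Fset T" and "b \<notin> Fset T" and "c \<notin> Fset T"
    and "0 < a" and "a < b" and "b < c"
proof -
  let ?F = "Fset T" and ?D = "Dset T"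
  let ?B = "shift a ?D \<union> {1..a} \<union> ?F" and ?C = "shift b ?D \<union> {1..b} \<union> ?F"
  have fin_F: "finite ?F" and fin_D: "finite ?D"
    using assms(1) finite_Fset finite_Dset by auto
  have fin_B: "finite ?B" and fin_C: "finite ?C"
    using fin_F fin_D finite_shift by auto
  have a: "a = Mex ?F" and b: "b = Mex ?B" and c: "c = Mex ?C"
    using assms(3) unfolding next_triple_def Let_def by auto
  show "a = Mex ?F" by (fact a)
  have a_notin: "a \<notin> ?F"
    unfolding a by (rule Mex_notin[OF fin_F])
  have b_notin: "b \<notin> ?B"
    unfolding b by (rule Mex_notin[OF fin_B])
  have c_notin: "c \<notin> ?C"
    unfolding c by (rule Mex_notin[OF fin_C])
  show "a \<notin> ?F" and "b \<notin> ?F" and "c \<notin> ?F"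
    using a_notin b_notin c_notin by auto
  show "0 < a"
    using a_notin assms(2) by (cases a) auto
  have "{..n} \<subseteq> insert 0 {1..n}" for n :: nat
    by (auto simp: Suc_le_eq)
  then have B_upto_a: "{..a} \<subseteq> ?B" and C_upto_b: "{..b} \<subseteq> ?C"
    using assms(2) by blast+
  show "a < b"
    unfolding b using fin_B B_upto_a by (rule Mex_greater)
  show "b < c"
    unfolding c using fin_C C_upto_b by (rule Mex_greater)
qed

lemma v_0: "v 0 = (0, 0, 0)"
  by (simp add: v_def)

lemma v_Suc: "v (Suc n) = next_triple (set (vs n))"
  by (simp add: v_def)

lemma set_vs: "set (vs n) = v ` {..n}"
proof (induction n)
  case 0
  then show ?case by (simp add: v_0)
next
  case (Suc n)
  have "set (vs (Suc n)) = insert (v (Suc n)) (set (vs n))"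
    by (simp add: v_Suc)
  then show ?case
    using Suc by (simp add: atMost_Suc)
qed

definition entries :: "nat \<Rightarrow> nat set" where
  "entries n = {v1 n, v2 n, v3 n}"

lemma Fset_image_v: "Fset (v ` A) = (\<Union>k\<in>A. entries k)"
  unfolding Fset_def entries_def v1_def v2_def v3_def by (auto split: prod.splits)

lemma entries_0: "entries 0 = {0}"
  by (simp add: entries_def v1_def v2_def v3_def v_0)

lemma v_Suc_spec:
  shows "v1 (Suc n) = Mex (\<Union>k\<le>n. entries k)"
    and "entries (Suc n) \<inter> (\<Union>k\<le>n. entries k) = {}"
    and "0 < v1 (Suc n)" and "v1 (Suc n) < v2 (Suc n)" and "v2 (Suc n) < v3 (Suc n)"
proof -
  have F: "Fset (set (vs n)) = (\<Union>k\<le>n. entries k)"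
    by (simp add: set_vs Fset_image_v)
  have zero: "0 \<in> Fset (set (vs n))"
    unfolding F using entries_0 by blast
  have next_eq: "next_triple (set (vs n)) = (v1 (Suc n), v2 (Suc n), v3 (Suc n))"
    by (simp add: v1_def v2_def v3_def v_Suc)
  note props = next_triple_spec[OF finite_set zero next_eq, unfolded F]
  show "v1 (Suc n) = Mex (\<Union>k\<le>n. entries k)"
    by (rule props(1))
  show "entries (Suc n) \<inter> (\<Union>k\<le>n. entries k) = {}"
    using props(2-4) unfolding entries_def by blast
  show "0 < v1 (Suc n)" and "v1 (Suc n) < v2 (Suc n)" and "v2 (Suc n) < v3 (Suc n)"
    by (fact props(5-7))+
qed

lemma entries_disjoint:
  assumes "i < j" shows "entries i \<inter> entries j = {}"
proof -
  obtain n where "j = Suc n" and "i \<le> n"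
    using assms by (cases j) auto
  then show ?thesis using v_Suc_spec(2)[of n] by auto
qed

lemma entries_unique: "x \<in> entries i \<Longrightarrow> x \<in> entries j \<Longrightarrow> i = j"
  using entries_disjoint[of i j] entries_disjoint[of j i] by (cases i j rule: linorder_cases) auto

lemma v_positive_increasing: "1 \<le> n \<Longrightarrow> 0 < v1 n \<and> v1 n < v2 n \<and> v2 n < v3 n"
  using v_Suc_spec[of "n - 1"] by (cases n) auto

lemma v_entries_distinct:
  assumes "1 \<le> i"
  shows "v1 i \<noteq> v2 j" and "v1 i \<noteq> v3 j" and "v2 i \<noteq> v3 j"
  using v_positive_increasing[OF assms] entries_unique[of "v1 i" i j] entries_unique[of "v2 i" i j]
  by (auto simp: entries_def)

lemma less_Mex_entries: "n < Mex (\<Union>k\<le>n. entries k)"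
proof (induction n)
  case 0
  have "(\<Union>k\<le>0. entries k) = {0}"
    by (simp add: entries_0)
  then show ?case
    using Mex_greater[of "{0}" 0] by simp
next
  case (Suc n)
  let ?F = "\<lambda>n. \<Union>k\<le>n. entries k"
  have fin: "finite (?F (Suc n))"
    by (simp add: entries_def)
  have "?F n \<subseteq> ?F (Suc n)"
    by (intro UN_mono) auto
  then have "Mex (?F n) \<le> Mex (?F (Suc n))"
    using fin by (rule Mex_mono)
  moreover have "Mex (?F n) \<noteq> Mex (?F (Suc n))"
  proof -
    have "v1 (Suc n) \<in> entries (Suc n)"
      by (simp add: entries_def)
    then have "Mex (?F n) \<in> ?F (Suc n)"
      unfolding v_Suc_spec(1) by auto
    then show ?thesis
      using Mex_notin[OF fin] by metis
  qed
  ultimately show ?case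
    using Suc.IH by simp
qed

lemma mem_entries_upto: "n \<in> (\<Union>k\<le>n. entries k)"
  using less_Mex_entries less_Mex_imp_mem by blast

lemma UN_entries_positive: "(\<Union>n\<in>{1..}. entries n) = {1..}"
proof (intro equalityI subsetI)
  fix m assume "m \<in> (\<Union>n\<in>{1..}. entries n)"
  then show "m \<in> {1..}"
    using v_positive_increasing unfolding entries_def by fastforce
next
  fix m :: nat assume "m \<in> {1..}"
  moreover obtain k where "m \<in> entries k"
    using mem_entries_upto by blast
  ultimately show "m \<in> (\<Union>n\<in>{1..}. entries n)"
    using entries_0 by (cases k) auto
qed

theorem corollary2:
  shows "{v1 n | n. n \<ge> 1} \<inter> {v2 n | n. n \<ge> 1} = {}
       \<and> {v1 n | n. n \<ge> 1} \<inter> {v3 n | n. n \<ge> 1} = {}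
       \<and> {v2 n | n. n \<ge> 1} \<inter> {v3 n | n. n \<ge> 1} = {}
       \<and> {v1 n | n. n \<ge> 1} \<union> {v2 n | n. n \<ge> 1} \<union> {v3 n | n. n \<ge> 1} = {1..}"
proof (intro conjI)
  let ?V1 = "{v1 n | n. n \<ge> 1}" and ?V2 = "{v2 n | n. n \<ge> 1}" and ?V3 = "{v3 n | n. n \<ge> 1}"
  show "?V1 \<inter> ?V2 = {}" and "?V1 \<inter> ?V3 = {}" and "?V2 \<inter> ?V3 = {}"
    using v_entries_distinct by auto
  have "?V1 \<union> ?V2 \<union> ?V3 = (\<Union>n\<in>{1..}. entries n)"
    unfolding entries_def by auto
  also have "\<dots> = {1..}"
    by (rule UN_entries_positive)
  finally show "?V1 \<union> ?V2 \<union> ?V3 = {1..}" .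
qed

end
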